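(* The axiom system $PAL_{int}$ is complete with respect to the class of all topo-models: for every formula $\varphi\in\mathcal{L}_{PAL_{int}}$, if $\varphi$ is valid in every topo-model, then $\varphi$ is a theorem of $PAL_{int}$.
   Context: Fix a countable set $\mathit{Prop}$ of propositional variables and a finite non-empty set $\mathcal{A}$ of agents. The language $\mathcal{L}_{PAL_{int}}$ is given by $\varphi ::= p \mid \neg\varphi \mid \varphi\wedge\varphi \mid K_i\varphi \mid \mathrm{int}(\varphi)\mid [\varphi]\varphi$ with $p\in\mathit{Prop}$, $i\in\mathcal{A}$; $\vee,\rightarrow,\leftrightarrow$ are abbreviations, $\bot := p\wedge\neg p$. Topo-models: Let $(X,\tau)$ be a topological space, $\mathrm{Int}$ its interior operator. A neighbourhood function set $\Phi$ on $(X,\tau)$ is a set of partial functions $\theta$ from $X$ to functions $\mathcal{A}\to\tau$ such that for all $x,y\in Dom(\theta)$, $i\in\mathcal{A}$, $U\in\tau$: (1) $\theta(x)(i)\in\tau$; (2) $x\in\theta(x)(i)$; (3) $\theta(x)(i)\subseteq Dom(\theta)$; (4) if $y\in\theta(x)(i)$ then $\theta(x)(i)=\theta(y)(i)$; (5) $\theta|_U\in\Phi$, where $Dom(\theta|_U)=Dom(\theta)\cap U$ and $\theta|_U(x)(i)=\theta(x)(i)\cap U$. A topo-model is $\mathcal{M}=(X,\tau,\Phi,V)$ with $V$ assigning to each $p$ a subset of $X$. A neighbourhood situation is $(x,\theta)$ with $\theta\in\Phi$, $x\in Dom(\theta)$. Semantics: $(x,\theta)\models p$ iff $x\in V(p)$;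 Booleans as usual; $(x,\theta)\models K_i\varphi$ iff $(y,\theta)\models\varphi$ for all $y\in\theta(x)(i)$; $(x,\theta)\models\mathrm{int}(\varphi)$ iff $x\in\mathrm{Int}([\![\varphi]\!]^\theta)$ where $[\![\varphi]\!]^\theta=\{y\in Dom(\theta)\mid (y,\theta)\models\varphi\}$; $(x,\theta)\models[\varphi]\psi$ iff $(x,\theta)\models\mathrm{int}(\varphi)$ implies $(x,\theta^\varphi)\models\psi$, where $\theta^\varphi=\theta|_{\mathrm{Int}([\![\varphi]\!]^\theta)}$. Validity in $\mathcal{M}$ means truth at all neighbourhood situations. The axiom system $PAL_{int}$ has axioms: propositional tautologies; $K_i(\varphi\to\psi)\to(K_i\varphi\to K_i\psi)$; $K_i\varphi\to\varphi$; $K_i\varphi\to K_iK_i\varphi$; $\neg K_i\varphi\to K_i\neg K_i\varphi$; $\mathrm{int}(\varphi\to\psi)\to(\mathrm{int}(\varphi)\to\mathrm{int}(\psi))$; $\mathrm{int}(\varphi)\to\varphi$; $\mathrm{int}(\varphi)\to\mathrm{int}(\mathrm{int}(\varphi))$; $K_i\varphi\to\mathrm{int}(\varphi)$; (R1) $[\varphi]p\leftrightarrow(\mathrm{int}(\varphi)\to p)$; (R2) $[\varphi]\neg\psi\leftrightarrow(\mathrm{int}(\varphi)\to\neg[\varphi]\psi)$; (R3) $[\varphi](\psi\wedge\chi)\leftrightarrow[\varphi]\psi\wedge[\varphi]\chi$; (R4) $[\varphi]\mathrm{int}(\psi)\leftrightarrow(\mathrm{int}(\varphi)\to\mathrm{int}([\varphi]\psi))$;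 (R5) $[\varphi]K_i\psi\leftrightarrow(\mathrm{int}(\varphi)\to K_i[\varphi]\psi)$; (R6) $[\varphi][\psi]\chi\leftrightarrow[\neg[\varphi]\neg\mathrm{int}(\psi)]\chi$; rules: modus ponens, from $\varphi$ infer $K_i\varphi$, from $\varphi$ infer $\mathrm{int}(\varphi)$, from $\varphi$ infer $[\psi]\varphi$. *)

theory Defs
  imports "HOL-Analysis.Abstract_Topology" "HOL-Library.Countable"
begin

text \<open>'p: propositional variables (countable), 'a: agents (finite, nonempty since
every HOL type is nonempty).\<close>

datatype ('p, 'a) fm =
    Atom 'p
  | Neg "('p, 'a) fm"
  | Conj "('p, 'a) fm" "('p, 'a) fm"
  | K 'a "('p, 'a) fm"
  | IntOp "('p, 'a) fm"
  | Ann "('p, 'a) fm" "('p, 'a) fm"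

definition Disj :: "('p, 'a) fm \<Rightarrow> ('p, 'a) fm \<Rightarrow> ('p, 'a) fm" where
  "Disj \<phi> \<psi> = Neg (Conj (Neg \<phi>) (Neg \<psi>))"

definition Imp :: "('p, 'a) fm \<Rightarrow> ('p, 'a) fm \<Rightarrow> ('p, 'a) fm" where
  "Imp \<phi> \<psi> = Disj (Neg \<phi>) \<psi>"

definition Iff :: "('p, 'a) fm \<Rightarrow> ('p, 'a) fm \<Rightarrow> ('p, 'a) fm" where
  "Iff \<phi> \<psi> = Conj (Imp \<phi> \<psi>) (Imp \<psi> \<phi>)"

type_synonym ('x, 'a) nbf = "'x \<Rightarrow> ('a \<Rightarrow> 'x set) option"

definition restr :: "'x set \<Rightarrow> ('x, 'a) nbf \<Rightarrow> ('x, 'a) nbf" where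
  "restr U \<theta> = (\<lambda>x. if x \<in> U then map_option (\<lambda>f i. f i \<inter> U) (\<theta> x) else None)"

definition nbf_set :: "'x topology \<Rightarrow> ('x, 'a) nbf set \<Rightarrow> bool" where
  "nbf_set T \<Phi> \<longleftrightarrow>
    (\<forall>\<theta>\<in>\<Phi>.
       dom \<theta> \<subseteq> topspace T \<and>
       (\<forall>x\<in>dom \<theta>. \<forall>i.
          openin T (the (\<theta> x) i) \<and>
          x \<in> the (\<theta> x) i \<and>
          the (\<theta> x) i \<subseteq> dom \<theta> \<and>
          (\<forall>y. y \<in> the (\<theta> x) i \<longrightarrow> the (\<theta> x) i = the (\<theta> y) i)) \<and>
       (\<forall>U. openin T U \<longrightarrow> restr U \<theta> \<in> \<Phi>))"

definition topo_model :: "'x topology \<Rightarrow> ('x, 'a) nbf set \<Rightarrow> ('p \<Rightarrow> 'x set) \<Rightarrow> bool" where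
  "topo_model T \<Phi> V \<longleftrightarrow> nbf_set T \<Phi> \<and> (\<forall>p. V p \<subseteq> topspace T)"

primrec sat :: "'x topology \<Rightarrow> ('p \<Rightarrow> 'x set) \<Rightarrow> ('p, 'a) fm \<Rightarrow> ('x, 'a) nbf \<Rightarrow> 'x \<Rightarrow> bool"
where
  "sat T V (Atom p) \<theta> x = (x \<in> V p)"
| "sat T V (Neg \<phi>) \<theta> x = (\<not> sat T V \<phi> \<theta> x)"
| "sat T V (Conj \<phi> \<psi>) \<theta> x = (sat T V \<phi> \<theta> x \<and> sat T V \<psi> \<theta> x)"
| "sat T V (K i \<phi>) \<theta> x = (\<forall>y\<in>the (\<theta> x) i. sat T V \<phi> \<theta> y)"
| "sat T V (IntOp \<phi>) \<theta> x = (x \<in> T interior_of {y \<in> dom \<theta>. sat T V \<phi> \<theta> y})"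
| "sat T V (Ann \<phi> \<psi>) \<theta> x =
     (x \<in> T interior_of {y \<in> dom \<theta>. sat T V \<phi> \<theta> y} \<longrightarrow>
        sat T V \<psi> (restr (T interior_of {y \<in> dom \<theta>. sat T V \<phi> \<theta> y}) \<theta>) x)"

definition valid_in :: "'x topology \<Rightarrow> ('x, 'a) nbf set \<Rightarrow> ('p \<Rightarrow> 'x set) \<Rightarrow> ('p, 'a) fm \<Rightarrow> bool" where
  "valid_in T \<Phi> V \<phi> \<longleftrightarrow> (\<forall>\<theta>\<in>\<Phi>. \<forall>x\<in>dom \<theta>. sat T V \<phi> \<theta> x)"

definition valid_all :: "'x itself \<Rightarrow> ('p, 'a) fm \<Rightarrow> bool" where
  "valid_all _ \<phi> \<longleftrightarrow>
     (\<forall>(T :: 'x topology) \<Phi> V. topo_model T \<Phi> V \<longrightarrow> valid_in T \<Phi> V \<phi>)"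

primrec tv :: "(('p, 'a) fm \<Rightarrow> bool) \<Rightarrow> ('p, 'a) fm \<Rightarrow> bool" where
  "tv v (Atom p) = v (Atom p)"
| "tv v (Neg \<phi>) = (\<not> tv v \<phi>)"
| "tv v (Conj \<phi> \<psi>) = (tv v \<phi> \<and> tv v \<psi>)"
| "tv v (K i \<phi>) = v (K i \<phi>)"
| "tv v (IntOp \<phi>) = v (IntOp \<phi>)"
| "tv v (Ann \<phi> \<psi>) = v (Ann \<phi> \<psi>)"

definition tautology :: "('p, 'a) fm \<Rightarrow> bool" where
  "tautology \<phi> \<longleftrightarrow> (\<forall>v. tv v \<phi>)"

inductive derivable :: "('p, 'a) fm \<Rightarrow> bool" where
  Taut: "tautology \<phi> \<Longrightarrow> derivable \<phi>"
| K_K: "derivable (Imp (K i (Imp \<phi> \<psi>)) (Imp (K i \<phi>) (K i \<psi>)))"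
| K_T: "derivable (Imp (K i \<phi>) \<phi>)"
| K_4: "derivable (Imp (K i \<phi>) (K i (K i \<phi>)))"
| K_5: "derivable (Imp (Neg (K i \<phi>)) (K i (Neg (K i \<phi>))))"
| Int_K: "derivable (Imp (IntOp (Imp \<phi> \<psi>)) (Imp (IntOp \<phi>) (IntOp \<psi>)))"
| Int_T: "derivable (Imp (IntOp \<phi>) \<phi>)"
| Int_4: "derivable (Imp (IntOp \<phi>) (IntOp (IntOp \<phi>)))"
| K_Int: "derivable (Imp (K i \<phi>) (IntOp \<phi>))"
| R1: "derivable (Iff (Ann \<phi> (Atom p)) (Imp (IntOp \<phi>) (Atom p)))"
| R2: "derivable (Iff (Ann \<phi> (Neg \<psi>)) (Imp (IntOp \<phi>) (Neg (Ann \<phi> \<psi>))))"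
| R3: "derivable (Iff (Ann \<phi> (Conj \<psi> \<chi>)) (Conj (Ann \<phi> \<psi>) (Ann \<phi> \<chi>)))"
| R4: "derivable (Iff (Ann \<phi> (IntOp \<psi>)) (Imp (IntOp \<phi>) (IntOp (Ann \<phi> \<psi>))))"
| R5: "derivable (Iff (Ann \<phi> (K i \<psi>)) (Imp (IntOp \<phi>) (K i (Ann \<phi> \<psi>))))"
| R6: "derivable (Iff (Ann \<phi> (Ann \<psi> \<chi>)) (Ann (Neg (Ann \<phi> (Neg (IntOp \<psi>)))) \<chi>))"
| MP: "derivable (Imp \<phi> \<psi>) \<Longrightarrow> derivable \<phi> \<Longrightarrow> derivable \<psi>"
| NecK: "derivable \<phi> \<Longrightarrow> derivable (K i \<phi>)"
| NecInt: "derivable \<phi> \<Longrightarrow> derivable (IntOp \<phi>)"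
| NecAnn: "derivable \<phi> \<Longrightarrow> derivable (Ann \<psi> \<phi>)"

end

theory Submission
  imports Defs
begin

text \<open>Soundness makes every derivable equivalence valid, and the reduction axioms R1--R6, read
  from left to right, turn every formula into a provably equivalent static one (without
  announcements); a complexity measure that weighs announcements heavily makes the rewriting
  terminate. For static formulas we build a canonical topo-model on the maximal consistent sets:
  \<open>K\<^sub>i\<close> is interpreted by the equivalence ``same \<open>K\<^sub>i\<close>-formulas'', and a set is
  open when around each of its points \<open>x\<close> it contains, for some \<open>\<psi>\<close> with \<open>int \<psi> \<in> x\<close>,
  every maximal consistent set that contains \<open>\<psi>\<close> and shares all the knowledge of \<open>x\<close>. The
  truth lemma then shows that a valid static formula lies in every maximal consistent set, hence
  is derivable.\<close>

section \<open>Propositional reasoning\<close>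

definition Falsum :: "('p, 'a) fm" where
  "Falsum = Conj (Atom undefined) (Neg (Atom undefined))"

primrec imps :: "('p, 'a) fm list \<Rightarrow> ('p, 'a) fm \<Rightarrow> ('p, 'a) fm" where
  "imps [] \<phi> = \<phi>"
| "imps (\<psi> # \<Psi>) \<phi> = Imp \<psi> (imps \<Psi> \<phi>)"

lemma tv_Imp [simp]: "tv v (Imp \<phi> \<psi>) = (tv v \<phi> \<longrightarrow> tv v \<psi>)"
  by (simp add: Imp_def Disj_def)

lemma tv_Iff [simp]: "tv v (Iff \<phi> \<psi>) = (tv v \<phi> \<longleftrightarrow> tv v \<psi>)"
  by (auto simp: Iff_def)

lemma tv_Falsum [simp]: "\<not> tv v Falsum"
  by (simp add: Falsum_def)

lemma tv_imps [simp]: "tv v (imps \<Psi> \<phi>) = ((\<forall>\<psi>\<in>set \<Psi>. tv v \<psi>) \<longrightarrow> tv v \<phi>)"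
  by (induction \<Psi>) auto

lemma derivable_imps_MP:
  "derivable (imps \<Psi> \<phi>) \<Longrightarrow> \<forall>\<psi>\<in>set \<Psi>. derivable \<psi> \<Longrightarrow> derivable \<phi>"
  by (induction \<Psi>) (auto intro: MP)

lemma derivable_by_tautology:
  "tautology (imps \<Psi> \<phi>) \<Longrightarrow> \<forall>\<psi>\<in>set \<Psi>. derivable \<psi> \<Longrightarrow> derivable \<phi>"
  by (rule derivable_imps_MP[OF Taut])

definition derivable_from :: "('p, 'a) fm set \<Rightarrow> ('p, 'a) fm \<Rightarrow> bool" where
  "derivable_from S \<phi> \<longleftrightarrow> (\<exists>\<Psi>. set \<Psi> \<subseteq> S \<and> derivable (imps \<Psi> \<phi>))"

lemma derivable_from_empty [simp]: "derivable_from {} \<phi> \<longleftrightarrow> derivable \<phi>"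
  by (simp add: derivable_from_def)

lemma derivable_from_derivable: "derivable \<phi> \<Longrightarrow> derivable_from S \<phi>"
  unfolding derivable_from_def by (intro exI[of _ "[]"]) simp

lemma derivable_from_mono: "derivable_from S \<phi> \<Longrightarrow> S \<subseteq> S' \<Longrightarrow> derivable_from S' \<phi>"
  unfolding derivable_from_def by blast

lemma derivable_from_MP:
  assumes "derivable_from S (Imp \<phi> \<psi>)" and "derivable_from S \<phi>"
  shows "derivable_from S \<psi>"
proof -
  obtain \<Psi>1 \<Psi>2 where "set \<Psi>1 \<subseteq> S" "derivable (imps \<Psi>1 (Imp \<phi> \<psi>))"
    and "set \<Psi>2 \<subseteq> S" "derivable (imps \<Psi>2 \<phi>)"
    using assms unfolding derivable_from_def by blast
  moreover have "derivable (imps (\<Psi>1 @ \<Psi>2) \<psi>)"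
    by (rule derivable_by_tautology[of "[imps \<Psi>1 (Imp \<phi> \<psi>), imps \<Psi>2 \<phi>]"])
      (use calculation in \<open>auto simp: tautology_def\<close>)
  ultimately show ?thesis
    unfolding derivable_from_def by (metis Un_subset_iff set_append)
qed

lemma derivable_from_imps_MP:
  "derivable_from S (imps \<Psi> \<phi>) \<Longrightarrow> \<forall>\<psi>\<in>set \<Psi>. derivable_from S \<psi> \<Longrightarrow> derivable_from S \<phi>"
  by (induction \<Psi>) (auto intro: derivable_from_MP)

lemma derivable_from_by_tautology:
  "tautology (imps \<Psi> \<phi>) \<Longrightarrow> \<forall>\<psi>\<in>set \<Psi>. derivable_from S \<psi> \<Longrightarrow> derivable_from S \<phi>"
  by (rule derivable_from_imps_MP[OF derivable_from_derivable[OF Taut]])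

lemma derivable_from_mem: "\<phi> \<in> S \<Longrightarrow> derivable_from S \<phi>"
  unfolding derivable_from_def
  by (rule exI[of _ "[\<phi>]"]) (auto intro: Taut simp: tautology_def)

lemma deduction:
  assumes "derivable_from (insert \<phi> S) \<psi>"
  shows "derivable_from S (Imp \<phi> \<psi>)"
proof -
  obtain \<Psi> where \<Psi>: "set \<Psi> \<subseteq> insert \<phi> S" "derivable (imps \<Psi> \<psi>)"
    using assms unfolding derivable_from_def by blast
  have "derivable (imps (filter (\<lambda>\<chi>. \<chi> \<noteq> \<phi>) \<Psi>) (Imp \<phi> \<psi>))"
    by (rule derivable_by_tautology[of "[imps \<Psi> \<psi>]"]) (use \<Psi>(2) in \<open>auto simp: tautology_def\<close>)
  moreover have "set (filter (\<lambda>\<chi>. \<chi> \<noteq> \<phi>) \<Psi>) \<subseteq> S"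
    using \<Psi>(1) by auto
  ultimately show ?thesis
    unfolding derivable_from_def by blast
qed

definition normal_modality :: "(('p, 'a) fm \<Rightarrow> ('p, 'a) fm) \<Rightarrow> bool" where
  "normal_modality M \<longleftrightarrow>
     (\<forall>\<phi>. derivable \<phi> \<longrightarrow> derivable (M \<phi>)) \<and>
     (\<forall>\<phi> \<psi>. derivable (Imp (M (Imp \<phi> \<psi>)) (Imp (M \<phi>) (M \<psi>))))"

lemma normal_modality_K: "normal_modality (K i)"
  by (simp add: normal_modality_def derivable.intros)

lemma normal_modality_IntOp: "normal_modality IntOp"
  by (simp add: normal_modality_def derivable.intros)

lemma derivable_from_normal_modality:
  assumes M: "normal_modality M" and "derivable_from {\<psi>. M \<psi> \<in> S} \<phi>"
  shows "derivable_from S (M \<phi>)"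
proof -
  obtain \<Psi> where \<Psi>: "set \<Psi> \<subseteq> {\<psi>. M \<psi> \<in> S}" "derivable (imps \<Psi> \<phi>)"
    using assms(2) unfolding derivable_from_def by blast
  have "derivable_from S (M \<phi>)"
    if "derivable_from S (M (imps \<Xi> \<phi>))" "set \<Xi> \<subseteq> {\<psi>. M \<psi> \<in> S}" for \<Xi>
    using that
  proof (induction \<Xi>)
    case (Cons \<xi> \<Xi>)
    have "derivable_from S (Imp (M (Imp \<xi> (imps \<Xi> \<phi>))) (Imp (M \<xi>) (M (imps \<Xi> \<phi>))))"
      using M by (simp add: normal_modality_def derivable_from_derivable)
    then have "derivable_from S (M (imps \<Xi> \<phi>))"
      using Cons.prems by (auto intro: derivable_from_MP derivable_from_mem)
    then show ?case
      using Cons.IH Cons.prems(2) by simp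
  qed simp
  moreover have "derivable_from S (M (imps \<Psi> \<phi>))"
    using M \<Psi>(2) by (simp add: normal_modality_def derivable_from_derivable)
  ultimately show ?thesis
    using \<Psi>(1) by blast
qed

lemma normal_modality_Iff_cong:
  assumes M: "normal_modality M" and "derivable (Iff \<phi> \<psi>)"
  shows "derivable (Iff (M \<phi>) (M \<psi>))"
proof -
  have "derivable (Imp (M \<phi>) (M \<psi>))" if "derivable (Imp \<phi> \<psi>)" for \<phi> \<psi>
    using M that unfolding normal_modality_def by (blast intro: MP)
  moreover have "derivable (Imp \<phi> \<psi>)" "derivable (Imp \<psi> \<phi>)"
    using assms(2) by (auto intro: derivable_by_tautology[of "[Iff \<phi> \<psi>]"] simp: tautology_def)
  ultimately show ?thesis
    by (intro derivable_by_tautology[of "[Imp (M \<phi>) (M \<psi>), Imp (M \<psi>) (M \<phi>)]"])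
      (auto simp: tautology_def)
qed


section \<open>Soundness\<close>

lemma dom_restr: "dom (restr U \<theta>) = dom \<theta> \<inter> U"
  by (auto simp: restr_def dom_def)

lemma the_restr: "x \<in> U \<Longrightarrow> x \<in> dom \<theta> \<Longrightarrow> the (restr U \<theta> x) i = the (\<theta> x) i \<inter> U"
  by (auto simp: restr_def)

lemma restr_restr: "restr U (restr W \<theta>) = restr (U \<inter> W) \<theta>"
  by (auto simp: restr_def fun_eq_iff option.map_comp comp_def Int_ac split: option.splits)

lemma sat_Imp [simp]: "sat T V (Imp \<phi> \<psi>) \<theta> x = (sat T V \<phi> \<theta> x \<longrightarrow> sat T V \<psi> \<theta> x)"
  by (simp add: Imp_def Disj_def)

lemma sat_Iff [simp]: "sat T V (Iff \<phi> \<psi>) \<theta> x = (sat T V \<phi> \<theta> x \<longleftrightarrow> sat T V \<psi> \<theta> x)"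
  by (auto simp: Iff_def)

lemma tv_sat: "tv (\<lambda>\<psi>. sat T V \<psi> \<theta> x) \<phi> = sat T V \<phi> \<theta> x"
  by (induction \<phi>) auto

locale nbf_space =
  fixes T :: "'x topology" and \<Phi> :: "('x, 'a) nbf set" and V :: "'p \<Rightarrow> 'x set"
  assumes nbf_set: "nbf_set T \<Phi>"
begin

abbreviation extension :: "('p, 'a) fm \<Rightarrow> ('x, 'a) nbf \<Rightarrow> 'x set" where
  "extension \<phi> \<theta> \<equiv> {y \<in> dom \<theta>. sat T V \<phi> \<theta> y}"

context
  fixes \<theta> :: "('x, 'a) nbf" and x :: 'x
  assumes \<theta>: "\<theta> \<in> \<Phi>" and x: "x \<in> dom \<theta>"
begin

lemma openin_nbhd: "openin T (the (\<theta> x) i)"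
  using nbf_set \<theta> x unfolding nbf_set_def by blast

lemma mem_nbhd: "x \<in> the (\<theta> x) i"
  using nbf_set \<theta> x unfolding nbf_set_def by blast

lemma nbhd_subset_dom: "the (\<theta> x) i \<subseteq> dom \<theta>"
  using nbf_set \<theta> x unfolding nbf_set_def by blast

lemma nbhd_eq: "y \<in> the (\<theta> x) i \<Longrightarrow> the (\<theta> y) i = the (\<theta> x) i"
  using nbf_set \<theta> x unfolding nbf_set_def by metis

end

lemma restr_mem: "\<theta> \<in> \<Phi> \<Longrightarrow> openin T U \<Longrightarrow> restr U \<theta> \<in> \<Phi>"
  using nbf_set unfolding nbf_set_def by blast

lemma openin_dom:
  assumes \<theta>: "\<theta> \<in> \<Phi>"
  shows "openin T (dom \<theta>)"
proof -
  \<comment> \<open>the cells of any single agent cover \<open>dom \<theta>\<close>\<close>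
  have "dom \<theta> = (\<Union>x\<in>dom \<theta>. the (\<theta> x) undefined)"
    using mem_nbhd[OF \<theta>] nbhd_subset_dom[OF \<theta>] by blast
  moreover have "openin T (\<Union>x\<in>dom \<theta>. the (\<theta> x) undefined)"
    using openin_nbhd[OF \<theta>] by (intro openin_Union) auto
  ultimately show ?thesis
    by simp
qed

lemma extension_IntOp:
  fixes \<theta> :: "('x, 'a) nbf"
  shows "extension (IntOp \<phi>) \<theta> = T interior_of extension \<phi> \<theta>"
  using interior_of_subset[of T "extension \<phi> \<theta>"] by auto

lemma sat_Int_K:
  fixes \<theta> :: "('x, 'a) nbf"
  shows "sat T V (Imp (IntOp (Imp \<phi> \<psi>)) (Imp (IntOp \<phi>) (IntOp \<psi>))) \<theta> x"
proof -
  have "extension (Imp \<phi> \<psi>) \<theta> \<inter> extension \<phi> \<theta> \<subseteq> extension \<psi> \<theta>"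
    by auto
  then have "T interior_of extension (Imp \<phi> \<psi>) \<theta> \<inter> T interior_of extension \<phi> \<theta>
      \<subseteq> T interior_of extension \<psi> \<theta>"
    unfolding interior_of_Int[symmetric] by (rule interior_of_mono)
  then show ?thesis
    by (simp only: sat_Imp sat.simps(5)) blast
qed

lemma sat_K_Int:
  assumes \<theta>: "\<theta> \<in> \<Phi>" and x: "x \<in> dom \<theta>"
  shows "sat T V (Imp (K i \<phi>) (IntOp \<phi>)) \<theta> x"
proof -
  have "the (\<theta> x) i \<subseteq> T interior_of extension \<phi> \<theta>" if "sat T V (K i \<phi>) \<theta> x"
  proof (rule interior_of_maximal)
    show "the (\<theta> x) i \<subseteq> extension \<phi> \<theta>"
      using that nbhd_subset_dom[OF \<theta> x] by auto
  qed (rule openin_nbhd[OF \<theta> x])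
  then show ?thesis
    using mem_nbhd[OF \<theta> x] by auto
qed

lemma sat_R4:
  fixes \<theta> :: "('x, 'a) nbf"
  shows "sat T V (Iff (Ann \<phi> (IntOp \<psi>)) (Imp (IntOp \<phi>) (IntOp (Ann \<phi> \<psi>)))) \<theta> x"
proof -
  define U where "U = T interior_of extension \<phi> \<theta>"
  define A where "A = {y \<in> dom \<theta>. y \<in> U \<longrightarrow> sat T V \<psi> (restr U \<theta>) y}"
  have "U \<subseteq> dom \<theta>"
    unfolding U_def using interior_of_subset[of T "extension \<phi> \<theta>"] by blast
  then have "extension \<psi> (restr U \<theta>) = A \<inter> U"
    unfolding A_def by (auto simp: dom_restr)
  moreover have "T interior_of (A \<inter> U) = T interior_of A \<inter> U"
    by (simp add: interior_of_Int U_def)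
  ultimately show ?thesis
    by (simp add: U_def[symmetric] A_def[symmetric])
qed

lemma sat_R6:
  fixes \<theta> :: "('x, 'a) nbf"
  shows "sat T V (Iff (Ann \<phi> (Ann \<psi> \<chi>)) (Ann (Neg (Ann \<phi> (Neg (IntOp \<psi>)))) \<chi>)) \<theta> x"
proof -
  define U where "U = T interior_of extension \<phi> \<theta>"
  define W where "W = T interior_of extension \<psi> (restr U \<theta>)"
  have "U \<subseteq> dom \<theta>"
    unfolding U_def using interior_of_subset[of T "extension \<phi> \<theta>"] by blast
  have "extension \<psi> (restr U \<theta>) \<subseteq> U"
    by (auto simp: dom_restr)
  then have "W \<subseteq> U"
    unfolding W_def using interior_of_subset[of T "extension \<psi> (restr U \<theta>)"] by blast
  have "sat T V (Neg (Ann \<phi> (Neg (IntOp \<psi>)))) \<theta> y \<longleftrightarrow> y \<in> U \<and> y \<in> W" for y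
    by (simp only: sat.simps U_def[symmetric] W_def[symmetric]) blast
  then have "extension (Neg (Ann \<phi> (Neg (IntOp \<psi>)))) \<theta> = W"
    using \<open>W \<subseteq> U\<close> \<open>U \<subseteq> dom \<theta>\<close> by blast
  then have "T interior_of extension (Neg (Ann \<phi> (Neg (IntOp \<psi>)))) \<theta> = W"
    by (simp add: W_def)
  moreover have "restr W (restr U \<theta>) = restr W \<theta>"
    using \<open>W \<subseteq> U\<close> by (simp add: restr_restr Int_absorb2)
  moreover have "sat T V (Ann \<phi> (Ann \<psi> \<chi>)) \<theta> x
      \<longleftrightarrow> (x \<in> U \<longrightarrow> x \<in> W \<longrightarrow> sat T V \<chi> (restr W (restr U \<theta>)) x)"
    by (simp only: sat.simps(6) U_def[symmetric] W_def[symmetric])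
  ultimately show ?thesis
    using \<open>W \<subseteq> U\<close> by (simp only: sat_Iff sat.simps(6)) blast
qed

theorem soundness: "derivable \<phi> \<Longrightarrow> \<theta> \<in> \<Phi> \<Longrightarrow> x \<in> dom \<theta> \<Longrightarrow> sat T V \<phi> \<theta> x"
proof (induction arbitrary: \<theta> x rule: derivable.induct)
  case (Taut \<phi>)
  then show ?case
    using tv_sat unfolding tautology_def by metis
next
  case (K_T i \<phi>)
  then show ?case
    using mem_nbhd by auto
next
  case (K_4 i \<phi>)
  then show ?case
    using nbhd_eq[of \<theta> x _ i] by simp
next
  case (K_5 i \<phi>)
  then show ?case
    using nbhd_eq[of \<theta> x _ i] by simp
next
  case (Int_K \<phi> \<psi>)
  show ?case
    by (rule sat_Int_K)
next
  case (Int_T \<phi>)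
  show ?case
    using interior_of_subset[of T "extension \<phi> \<theta>"] by auto
next
  case (Int_4 \<phi>)
  show ?case
    using extension_IntOp by simp
next
  case (K_Int i \<phi>)
  then show ?case
    by (rule sat_K_Int)
next
  case (R4 \<phi> \<psi>)
  show ?case
    by (rule sat_R4)
next
  case (R5 \<phi> i \<psi>)
  then show ?case
    by (auto simp: the_restr)
next
  case (R6 \<phi> \<psi> \<chi>)
  show ?case
    by (rule sat_R6)
next
  case (MP \<phi> \<psi>)
  then show ?case
    by simp
next
  case (NecK \<phi> i)
  then show ?case
    using nbhd_subset_dom[OF NecK.prems, of i] by (simp only: sat.simps) blast
next
  case (NecInt \<phi>)
  then have "extension \<phi> \<theta> = dom \<theta>"
    by blast
  then show ?case
    using NecInt.prems openin_dom by (simp add: interior_of_openin)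
next
  case (NecAnn \<phi> \<psi>)
  then show ?case
    using restr_mem[OF NecAnn.prems(1) openin_interior_of] by (auto simp: dom_restr)
qed auto

end

lemma topo_model_derivable_valid:
  assumes "topo_model T \<Phi> V" and "derivable \<phi>"
  shows "valid_in T \<Phi> V \<phi>"
proof -
  interpret nbf_space T \<Phi> V
    using assms(1) by unfold_locales (simp add: topo_model_def)
  show ?thesis
    using soundness assms(2) by (simp add: valid_in_def)
qed


section \<open>Reduction to static formulas\<close>

primrec static :: "('p, 'a) fm \<Rightarrow> bool" where
  "static (Atom p) = True"
| "static (Neg \<phi>) = static \<phi>"
| "static (Conj \<phi> \<psi>) = (static \<phi> \<and> static \<psi>)"
| "static (K i \<phi>) = static \<phi>"
| "static (IntOp \<phi>) = static \<phi>"
| "static (Ann \<phi> \<psi>) = False"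

definition has_static_equiv :: "('p, 'a) fm \<Rightarrow> bool" where
  "has_static_equiv \<phi> \<longleftrightarrow> (\<exists>s. static s \<and> derivable (Iff \<phi> s))"

lemma has_static_equivI: "static s \<Longrightarrow> derivable (Iff \<phi> s) \<Longrightarrow> has_static_equiv \<phi>"
  unfolding has_static_equiv_def by blast

lemma has_static_equiv_static: "static \<phi> \<Longrightarrow> has_static_equiv \<phi>"
  by (rule has_static_equivI) (auto intro: Taut simp: tautology_def)

lemma has_static_equiv_Iff:
  assumes "derivable (Iff \<phi> \<psi>)" and "has_static_equiv \<psi>"
  shows "has_static_equiv \<phi>"
proof -
  obtain s where "static s" "derivable (Iff \<psi> s)"
    using assms(2) unfolding has_static_equiv_def by blast
  moreover have "derivable (Iff \<phi> s)"
    by (rule derivable_by_tautology[of "[Iff \<phi> \<psi>, Iff \<psi> s]"])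
      (use assms(1) calculation(2) in \<open>auto simp: tautology_def\<close>)
  ultimately show ?thesis
    by (blast intro: has_static_equivI)
qed

lemma has_static_equiv_Neg:
  assumes "has_static_equiv \<phi>"
  shows "has_static_equiv (Neg \<phi>)"
proof -
  obtain s where "static s" "derivable (Iff \<phi> s)"
    using assms unfolding has_static_equiv_def by blast
  moreover have "derivable (Iff (Neg \<phi>) (Neg s))"
    by (rule derivable_by_tautology[of "[Iff \<phi> s]"])
      (use calculation(2) in \<open>auto simp: tautology_def\<close>)
  ultimately show ?thesis
    by (intro has_static_equivI[of "Neg s"]) simp_all
qed

lemma has_static_equiv_Conj:
  assumes "has_static_equiv \<phi>" and "has_static_equiv \<psi>"
  shows "has_static_equiv (Conj \<phi> \<psi>)"
proof -
  obtain s t where "static s" "derivable (Iff \<phi> s)" "static t" "derivable (Iff \<psi> t)"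
    using assms unfolding has_static_equiv_def by blast
  moreover have "derivable (Iff (Conj \<phi> \<psi>) (Conj s t))"
    by (rule derivable_by_tautology[of "[Iff \<phi> s, Iff \<psi> t]"])
      (use calculation(2,4) in \<open>auto simp: tautology_def\<close>)
  ultimately show ?thesis
    by (intro has_static_equivI[of "Conj s t"]) simp_all
qed

lemma has_static_equiv_Imp:
  "has_static_equiv \<phi> \<Longrightarrow> has_static_equiv \<psi> \<Longrightarrow> has_static_equiv (Imp \<phi> \<psi>)"
  unfolding Imp_def Disj_def by (intro has_static_equiv_Neg has_static_equiv_Conj)

lemma has_static_equiv_normal_modality:
  assumes M: "normal_modality M" and static_M: "\<And>\<phi>. static \<phi> \<Longrightarrow> static (M \<phi>)"
    and "has_static_equiv \<phi>"
  shows "has_static_equiv (M \<phi>)"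
proof -
  obtain s where "static s" "derivable (Iff \<phi> s)"
    using assms(3) unfolding has_static_equiv_def by blast
  then show ?thesis
    using normal_modality_Iff_cong[OF M] static_M by (blast intro: has_static_equivI)
qed

lemma has_static_equiv_K: "has_static_equiv \<phi> \<Longrightarrow> has_static_equiv (K i \<phi>)"
  by (rule has_static_equiv_normal_modality[OF normal_modality_K]) simp

lemma has_static_equiv_IntOp: "has_static_equiv \<phi> \<Longrightarrow> has_static_equiv (IntOp \<phi>)"
  by (rule has_static_equiv_normal_modality[OF normal_modality_IntOp]) simp

text \<open>The weight \<open>4 + complexity \<phi>\<close> of an announcement is what makes every reduction
  axiom, read from left to right, strictly decrease complexity (R6 being the critical case).\<close>
primrec complexity :: "('p, 'a) fm \<Rightarrow> nat" where
  "complexity (Atom p) = 1"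
| "complexity (Neg \<phi>) = Suc (complexity \<phi>)"
| "complexity (Conj \<phi> \<psi>) = Suc (max (complexity \<phi>) (complexity \<psi>))"
| "complexity (K i \<phi>) = Suc (complexity \<phi>)"
| "complexity (IntOp \<phi>) = Suc (complexity \<phi>)"
| "complexity (Ann \<phi> \<psi>) = (4 + complexity \<phi>) * complexity \<psi>"

lemma complexity_pos: "complexity \<phi> > 0"
  by (induction \<phi>) auto

lemma complexity_IntOp_less_Ann: "complexity (IntOp \<phi>) < complexity (Ann \<phi> \<psi>)"
proof -
  obtain n where "complexity \<psi> = Suc n"
    using complexity_pos gr0_implies_Suc by blast
  then show ?thesis
    by simp
qed

lemma complexity_Ann_mono:
  "complexity \<psi> < complexity \<chi> \<Longrightarrow> complexity (Ann \<phi> \<psi>) < complexity (Ann \<phi> \<chi>)"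
  by simp

lemma complexity_R6_less:
  "complexity (Ann (Neg (Ann \<phi> (Neg (IntOp \<psi>)))) \<chi>) < complexity (Ann \<phi> (Ann \<psi> \<chi>))"
proof -
  have "5 + (4 + complexity \<phi>) * (2 + complexity \<psi>) < (4 + complexity \<phi>) * (4 + complexity \<psi>)"
    by (simp add: algebra_simps)
  then show ?thesis
    using complexity_pos[of \<chi>] by (simp add: mult.assoc)
qed

lemma has_static_equiv_Ann:
  fixes \<alpha> \<beta> :: "('p, 'a) fm"
  assumes less: "\<And>\<chi> :: ('p, 'a) fm. complexity \<chi> < complexity (Ann \<alpha> \<beta>) \<Longrightarrow> has_static_equiv \<chi>"
  shows "has_static_equiv (Ann \<alpha> \<beta>)"
proof -
  have IntOp_\<alpha>: "has_static_equiv (IntOp \<alpha>)"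
    by (rule less[OF complexity_IntOp_less_Ann])
  show ?thesis
  proof (cases \<beta>)
    case (Atom p)
    have "has_static_equiv (Imp (IntOp \<alpha>) (Atom p))"
      by (intro has_static_equiv_Imp IntOp_\<alpha> has_static_equiv_static) simp
    then show ?thesis
      unfolding Atom by (rule has_static_equiv_Iff[OF R1])
  next
    case (Neg \<beta>')
    have "has_static_equiv (Ann \<alpha> \<beta>')"
      by (intro less) (simp add: Neg)
    then have "has_static_equiv (Imp (IntOp \<alpha>) (Neg (Ann \<alpha> \<beta>')))"
      by (intro has_static_equiv_Imp IntOp_\<alpha> has_static_equiv_Neg)
    then show ?thesis
      unfolding Neg by (rule has_static_equiv_Iff[OF R2])
  next
    case (Conj \<beta>1 \<beta>2)
    have "has_static_equiv (Ann \<alpha> \<beta>1)" "has_static_equiv (Ann \<alpha> \<beta>2)"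
      by (intro less, unfold Conj, rule complexity_Ann_mono, simp)+
    then have "has_static_equiv (Conj (Ann \<alpha> \<beta>1) (Ann \<alpha> \<beta>2))"
      by (rule has_static_equiv_Conj)
    then show ?thesis
      unfolding Conj by (rule has_static_equiv_Iff[OF R3])
  next
    case (K i \<beta>')
    have "has_static_equiv (Ann \<alpha> \<beta>')"
      by (intro less) (simp add: K)
    then have "has_static_equiv (Imp (IntOp \<alpha>) (K i (Ann \<alpha> \<beta>')))"
      by (intro has_static_equiv_Imp IntOp_\<alpha> has_static_equiv_K)
    then show ?thesis
      unfolding K by (rule has_static_equiv_Iff[OF R5])
  next
    case (IntOp \<beta>')
    have "has_static_equiv (Ann \<alpha> \<beta>')"
      by (intro less) (simp add: IntOp)
    then have "has_static_equiv (Imp (IntOp \<alpha>) (IntOp (Ann \<alpha> \<beta>')))"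
      by (intro has_static_equiv_Imp IntOp_\<alpha> has_static_equiv_IntOp)
    then show ?thesis
      unfolding IntOp by (rule has_static_equiv_Iff[OF R4])
  next
    case (Ann \<beta>1 \<beta>2)
    have "has_static_equiv (Ann (Neg (Ann \<alpha> (Neg (IntOp \<beta>1)))) \<beta>2)"
      using less complexity_R6_less unfolding Ann by blast
    then show ?thesis
      unfolding Ann by (rule has_static_equiv_Iff[OF R6])
  qed
qed

theorem has_static_equiv: "has_static_equiv \<phi>"
proof (induction \<phi> rule: measure_induct_rule[of complexity])
  case (less \<phi>)
  show ?case
  proof (cases \<phi>)
    case (Ann \<alpha> \<beta>)
    show ?thesis
      unfolding Ann by (rule has_static_equiv_Ann, rule less) (simp add: Ann)
  qed (use less in \<open>auto intro: has_static_equiv_static has_static_equiv_Neg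
        has_static_equiv_Conj has_static_equiv_K has_static_equiv_IntOp\<close>)
qed


section \<open>Maximal consistent sets\<close>

definition consistent :: "('p, 'a) fm set \<Rightarrow> bool" where
  "consistent S \<longleftrightarrow> \<not> derivable_from S Falsum"

definition max_consistent :: "('p, 'a) fm set \<Rightarrow> bool" where
  "max_consistent x \<longleftrightarrow> consistent x \<and> (\<forall>\<phi>. \<phi> \<in> x \<or> Neg \<phi> \<in> x)"

lemma consistent_insert_Neg: "\<not> derivable_from S \<phi> \<Longrightarrow> consistent (insert (Neg \<phi>) S)"
  unfolding consistent_def
  by (auto dest!: deduction intro: derivable_from_by_tautology[of "[Imp (Neg \<phi>) Falsum]"]
      simp: tautology_def)

lemma consistent_insert:
  assumes "consistent S"
  shows "consistent (insert \<phi> S) \<or> consistent (insert (Neg \<phi>) S)"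
proof (rule ccontr)
  assume "\<not> ?thesis"
  then have "derivable_from S (Imp \<phi> Falsum)" "derivable_from S (Imp (Neg \<phi>) Falsum)"
    unfolding consistent_def by (auto dest: deduction)
  then have "derivable_from S Falsum"
    by (intro derivable_from_by_tautology[of "[Imp \<phi> Falsum, Imp (Neg \<phi>) Falsum]"])
      (auto simp: tautology_def)
  then show False
    using assms unfolding consistent_def by blast
qed

lemma consistent_Union_chain:
  assumes "\<C> \<noteq> {}" and "subset.chain {S. consistent S} \<C>"
  shows "consistent (\<Union>\<C>)"
  unfolding consistent_def derivable_from_def
proof
  assume "\<exists>\<Psi>. set \<Psi> \<subseteq> \<Union>\<C> \<and> derivable (imps \<Psi> Falsum)"
  then obtain \<Psi> where "set \<Psi> \<subseteq> \<Union>\<C>" "derivable (imps \<Psi> Falsum)"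
    by blast
  moreover obtain S where "S \<in> \<C>" "set \<Psi> \<subseteq> S"
    using finite_subset_Union_chain[OF _ calculation(1) assms] by blast
  ultimately show False
    using assms(2) unfolding subset.chain_def consistent_def derivable_from_def by blast
qed

theorem lindenbaum:
  assumes "consistent S"
  obtains x where "max_consistent x" and "S \<subseteq> x"
proof -
  let ?\<A> = "{x. consistent x \<and> S \<subseteq> x}"
  have "\<exists>x\<in>?\<A>. \<forall>y\<in>?\<A>. x \<subseteq> y \<longrightarrow> y = x"
  proof (rule subset_Zorn_nonempty)
    show "?\<A> \<noteq> {}"
      using assms by blast
    fix \<C> assume "\<C> \<noteq> {}" and "subset.chain ?\<A> \<C>"
    then have "subset.chain {S. consistent S} \<C>" and "\<forall>C\<in>\<C>. S \<subseteq> C"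
      unfolding subset.chain_def by auto
    then show "\<Union>\<C> \<in> ?\<A>"
      using \<open>\<C> \<noteq> {}\<close> consistent_Union_chain by blast
  qed
  then obtain x where x: "consistent x" "S \<subseteq> x"
    and max: "\<And>y. consistent y \<Longrightarrow> S \<subseteq> y \<Longrightarrow> x \<subseteq> y \<Longrightarrow> y = x"
    by auto
  have "\<phi> \<in> x \<or> Neg \<phi> \<in> x" for \<phi>
    using consistent_insert[OF x(1), of \<phi>] max[of "insert \<phi> x"] max[of "insert (Neg \<phi>) x"] x(2)
    by blast
  then show ?thesis
    using that x unfolding max_consistent_def by blast
qed

lemma max_consistent_derivable_from:
  assumes "max_consistent x" and "derivable_from x \<phi>"
  shows "\<phi> \<in> x"
proof (rule ccontr)
  assume "\<phi> \<notin> x"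
  then have "derivable_from x (Neg \<phi>)"
    using assms(1) derivable_from_mem unfolding max_consistent_def by blast
  then have "derivable_from x Falsum"
    using assms(2) by (intro derivable_from_by_tautology[of "[\<phi>, Neg \<phi>]"]) (auto simp: tautology_def)
  then show False
    using assms(1) unfolding max_consistent_def consistent_def by blast
qed

theorem derivable_from_iff_max_consistent:
  "derivable_from S \<phi> \<longleftrightarrow> (\<forall>x. max_consistent x \<and> S \<subseteq> x \<longrightarrow> \<phi> \<in> x)"
proof
  assume "derivable_from S \<phi>"
  then show "\<forall>x. max_consistent x \<and> S \<subseteq> x \<longrightarrow> \<phi> \<in> x"
    using derivable_from_mono max_consistent_derivable_from by blast
next
  assume \<phi>: "\<forall>x. max_consistent x \<and> S \<subseteq> x \<longrightarrow> \<phi> \<in> x"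
  show "derivable_from S \<phi>"
  proof (rule ccontr)
    assume "\<not> derivable_from S \<phi>"
    then obtain x where x: "max_consistent x" "insert (Neg \<phi>) S \<subseteq> x"
      using consistent_insert_Neg lindenbaum by metis
    then have "derivable_from x Falsum"
      using \<phi> by (intro derivable_from_by_tautology[of "[\<phi>, Neg \<phi>]"])
        (auto simp: tautology_def intro: derivable_from_mem)
    then show False
      using x(1) unfolding max_consistent_def consistent_def by blast
  qed
qed

context
  fixes x :: "('p, 'a) fm set"
  assumes x: "max_consistent x"
begin

lemma max_consistent_by_tautology:
  assumes "tautology (imps \<Psi> \<phi>)" and "set \<Psi> \<subseteq> x"
  shows "\<phi> \<in> x"
proof -
  have "derivable_from x \<phi>"
    using assms by (intro derivable_from_by_tautology[of \<Psi>]) (auto intro: derivable_from_mem)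
  then show ?thesis
    by (rule max_consistent_derivable_from[OF x])
qed

lemma max_consistent_Neg: "Neg \<phi> \<in> x \<longleftrightarrow> \<phi> \<notin> x"
proof -
  have "\<phi> \<in> x \<Longrightarrow> Neg \<phi> \<in> x \<Longrightarrow> Falsum \<in> x"
    using max_consistent_by_tautology[of "[\<phi>, Neg \<phi>]" Falsum] by (simp add: tautology_def)
  moreover have "Falsum \<notin> x"
    using x derivable_from_mem unfolding max_consistent_def consistent_def by blast
  ultimately show ?thesis
    using x unfolding max_consistent_def by blast
qed

lemma max_consistent_Conj: "Conj \<phi> \<psi> \<in> x \<longleftrightarrow> \<phi> \<in> x \<and> \<psi> \<in> x"
proof
  assume "Conj \<phi> \<psi> \<in> x"
  then show "\<phi> \<in> x \<and> \<psi> \<in> x"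
    using max_consistent_by_tautology[of "[Conj \<phi> \<psi>]" \<phi>]
      max_consistent_by_tautology[of "[Conj \<phi> \<psi>]" \<psi>]
    by (simp add: tautology_def)
next
  assume "\<phi> \<in> x \<and> \<psi> \<in> x"
  then show "Conj \<phi> \<psi> \<in> x"
    using max_consistent_by_tautology[of "[\<phi>, \<psi>]" "Conj \<phi> \<psi>"] by (simp add: tautology_def)
qed

lemma max_consistent_MP: "Imp \<phi> \<psi> \<in> x \<Longrightarrow> \<phi> \<in> x \<Longrightarrow> \<psi> \<in> x"
  using max_consistent_by_tautology[of "[Imp \<phi> \<psi>, \<phi>]" \<psi>] by (simp add: tautology_def)

lemma max_consistent_derivable: "derivable \<phi> \<Longrightarrow> \<phi> \<in> x"
  by (rule max_consistent_derivable_from[OF x derivable_from_derivable])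

lemma max_consistent_normal_modality:
  "normal_modality M \<Longrightarrow> derivable_from {\<psi>. M \<psi> \<in> x} \<phi> \<Longrightarrow> M \<phi> \<in> x"
  by (rule max_consistent_derivable_from[OF x derivable_from_normal_modality])

end


section \<open>The canonical topo-model\<close>

definition canonical_rel :: "'a \<Rightarrow> ('p, 'a) fm set \<Rightarrow> ('p, 'a) fm set \<Rightarrow> bool" where
  "canonical_rel i x y \<longleftrightarrow> (\<forall>\<chi>. K i \<chi> \<in> x \<longleftrightarrow> K i \<chi> \<in> y)"

lemma canonical_relI:
  assumes x: "max_consistent x" and y: "max_consistent y" and "\<forall>\<chi>. K i \<chi> \<in> x \<longrightarrow> \<chi> \<in> y"
  shows "canonical_rel i x y"
  unfolding canonical_rel_def
proof (intro allI iffI)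
  fix \<chi> assume "K i \<chi> \<in> x"
  then have "K i (K i \<chi>) \<in> x"
    using max_consistent_MP[OF x] max_consistent_derivable[OF x K_4] by blast
  then show "K i \<chi> \<in> y"
    using assms(3) by blast
next
  fix \<chi> assume "K i \<chi> \<in> y"
  show "K i \<chi> \<in> x"
  proof (rule ccontr)
    assume "K i \<chi> \<notin> x"
    then have "K i (Neg (K i \<chi>)) \<in> x"
      using max_consistent_MP[OF x] max_consistent_derivable[OF x K_5] max_consistent_Neg[OF x]
      by blast
    then show False
      using assms(3) \<open>K i \<chi> \<in> y\<close> max_consistent_Neg[OF y] by blast
  qed
qed

lemma max_consistent_K_iff:
  assumes x: "max_consistent x"
  shows "K i \<phi> \<in> x \<longleftrightarrow> (\<forall>y. max_consistent y \<and> canonical_rel i x y \<longrightarrow> \<phi> \<in> y)"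
proof
  assume "K i \<phi> \<in> x"
  show "\<forall>y. max_consistent y \<and> canonical_rel i x y \<longrightarrow> \<phi> \<in> y"
  proof (intro allI impI)
    fix y assume y: "max_consistent y \<and> canonical_rel i x y"
    then have "K i \<phi> \<in> y"
      using \<open>K i \<phi> \<in> x\<close> unfolding canonical_rel_def by blast
    moreover have "max_consistent y"
      using y by blast
    ultimately show "\<phi> \<in> y"
      using max_consistent_MP max_consistent_derivable[OF _ K_T] by metis
  qed
next
  assume "\<forall>y. max_consistent y \<and> canonical_rel i x y \<longrightarrow> \<phi> \<in> y"
  then have "derivable_from {\<chi>. K i \<chi> \<in> x} \<phi>"
    using canonical_relI[OF x] unfolding derivable_from_iff_max_consistent by blast
  then show "K i \<phi> \<in> x"
    by (rule max_consistent_normal_modality[OF x normal_modality_K])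
qed

definition canonical_basic :: "('p, 'a) fm set \<Rightarrow> ('p, 'a) fm \<Rightarrow> ('p, 'a) fm set set" where
  "canonical_basic x \<psi> = {y. max_consistent y \<and> \<psi> \<in> y \<and> (\<forall>i. canonical_rel i x y)}"

definition canonical_open :: "('p, 'a) fm set set \<Rightarrow> bool" where
  "canonical_open U \<longleftrightarrow>
     U \<subseteq> {x. max_consistent x} \<and> (\<forall>x\<in>U. \<exists>\<psi>. IntOp \<psi> \<in> x \<and> canonical_basic x \<psi> \<subseteq> U)"

lemma istopology_canonical_open: "istopology (canonical_open :: ('p, 'a) fm set set \<Rightarrow> bool)"
  unfolding istopology_def
proof (intro conjI allI impI)
  fix U W :: "('p, 'a) fm set set"
  assume U: "canonical_open U" and W: "canonical_open W"
  show "canonical_open (U \<inter> W)"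
    unfolding canonical_open_def
  proof (intro conjI ballI)
    show "U \<inter> W \<subseteq> {x. max_consistent x}"
      using U unfolding canonical_open_def by blast
    fix x assume x: "x \<in> U \<inter> W"
    then have "max_consistent x"
      using U unfolding canonical_open_def by blast
    obtain \<psi> where "IntOp \<psi> \<in> x" "canonical_basic x \<psi> \<subseteq> U"
      using U x unfolding canonical_open_def by blast
    moreover obtain \<chi> where "IntOp \<chi> \<in> x" "canonical_basic x \<chi> \<subseteq> W"
      using W x unfolding canonical_open_def by blast
    moreover have "IntOp (Conj \<psi> \<chi>) \<in> x"
    proof (rule max_consistent_normal_modality[OF \<open>max_consistent x\<close> normal_modality_IntOp])
      have "\<forall>\<xi>\<in>set [\<psi>, \<chi>]. derivable_from {\<xi>. IntOp \<xi> \<in> x} \<xi>"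
        using \<open>IntOp \<psi> \<in> x\<close> \<open>IntOp \<chi> \<in> x\<close> by (simp add: derivable_from_mem)
      then show "derivable_from {\<xi>. IntOp \<xi> \<in> x} (Conj \<psi> \<chi>)"
        by (rule derivable_from_by_tautology[rotated]) (simp add: tautology_def)
    qed
    moreover have "canonical_basic x (Conj \<psi> \<chi>) = canonical_basic x \<psi> \<inter> canonical_basic x \<chi>"
      unfolding canonical_basic_def by (auto simp: max_consistent_Conj)
    ultimately show "\<exists>\<psi>. IntOp \<psi> \<in> x \<and> canonical_basic x \<psi> \<subseteq> U \<inter> W"
      by blast
  qed
next
  fix \<U> :: "('p, 'a) fm set set set"
  assume \<U>: "\<forall>U\<in>\<U>. canonical_open U"
  show "canonical_open (\<Union>\<U>)"
    unfolding canonical_open_def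
  proof (intro conjI ballI)
    show "\<Union>\<U> \<subseteq> {x. max_consistent x}"
      using \<U> unfolding canonical_open_def by blast
    fix x assume "x \<in> \<Union>\<U>"
    then obtain U where "U \<in> \<U>" and "x \<in> U"
      by blast
    then obtain \<psi> where "IntOp \<psi> \<in> x" and "canonical_basic x \<psi> \<subseteq> U"
      using \<U> unfolding canonical_open_def by blast
    then show "\<exists>\<psi>. IntOp \<psi> \<in> x \<and> canonical_basic x \<psi> \<subseteq> \<Union>\<U>"
      using \<open>U \<in> \<U>\<close> by blast
  qed
qed

definition canonical_topology :: "('p, 'a) fm set topology" where
  "canonical_topology = topology canonical_open"

lemma openin_canonical_topology: "openin canonical_topology = canonical_open"
  unfolding canonical_topology_def by (rule topology_inverse'[OF istopology_canonical_open])

lemma canonical_open_Int: "canonical_open U \<Longrightarrow> canonical_open W \<Longrightarrow> canonical_open (U \<inter> W)"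
  using openin_Int[of canonical_topology] unfolding openin_canonical_topology by blast

lemma canonical_open_if_rel_closed:
  assumes "U \<subseteq> {x. max_consistent x}"
    and "\<And>x y. x \<in> U \<Longrightarrow> max_consistent y \<Longrightarrow> \<forall>i. canonical_rel i x y \<Longrightarrow> y \<in> U"
  shows "canonical_open U"
proof -
  have "derivable (IntOp (Neg Falsum))"
    by (intro NecInt Taut) (simp add: tautology_def)
  then have "IntOp (Neg Falsum) \<in> x" if "x \<in> U" for x
    using assms(1) that max_consistent_derivable by blast
  then show ?thesis
    using assms unfolding canonical_open_def canonical_basic_def by blast
qed

definition canonical_cell :: "('p, 'a) fm set \<Rightarrow> 'a \<Rightarrow> ('p, 'a) fm set set" where
  "canonical_cell x i = {y. max_consistent y \<and> canonical_rel i x y}"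

definition canonical_nbf :: "(('p, 'a) fm set, 'a) nbf" where
  "canonical_nbf x = (if max_consistent x then Some (canonical_cell x) else None)"

definition canonical_nbf_set :: "(('p, 'a) fm set, 'a) nbf set" where
  "canonical_nbf_set = {restr U canonical_nbf | U. canonical_open U}"

definition canonical_val :: "'p \<Rightarrow> ('p, 'a) fm set set" where
  "canonical_val p = {x. max_consistent x \<and> Atom p \<in> x}"

lemma canonical_open_cell: "canonical_open (canonical_cell x i)"
  by (rule canonical_open_if_rel_closed) (auto simp: canonical_cell_def canonical_rel_def)

lemma canonical_open_space: "canonical_open {x. max_consistent x}"
  by (rule canonical_open_if_rel_closed) auto

lemma dom_canonical_nbf: "dom canonical_nbf = {x. max_consistent x}"
  by (auto simp: canonical_nbf_def split: if_splits)

lemma the_canonical_nbf: "max_consistent x \<Longrightarrow> the (canonical_nbf x) i = canonical_cell x i"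
  by (simp add: canonical_nbf_def)

lemma topspace_canonical_topology: "topspace canonical_topology = {x. max_consistent x}"
  unfolding topspace_def openin_canonical_topology using canonical_open_space
  unfolding canonical_open_def by blast

lemma topo_model_canonical:
  "topo_model (canonical_topology :: ('p, 'a) fm set topology) canonical_nbf_set canonical_val"
  unfolding topo_model_def nbf_set_def
proof (intro conjI ballI allI impI)
  fix p :: 'p
  show "canonical_val p \<subseteq> topspace canonical_topology"
    unfolding topspace_canonical_topology canonical_val_def by blast
next
  fix \<theta> :: "(('p, 'a) fm set, 'a) nbf"
  assume "\<theta> \<in> canonical_nbf_set"
  then obtain U where \<theta>: "\<theta> = restr U canonical_nbf" and U: "canonical_open U"
    unfolding canonical_nbf_set_def by blast
  then have U_mcs: "U \<subseteq> {x. max_consistent x}"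
    unfolding canonical_open_def by blast
  then have dom: "dom \<theta> = U"
    unfolding \<theta> dom_restr dom_canonical_nbf by blast
  have cell: "the (\<theta> z) i = canonical_cell z i \<inter> U" if "z \<in> U" for z i
    using that U_mcs unfolding \<theta> by (auto simp: the_restr dom_canonical_nbf the_canonical_nbf)
  show "dom \<theta> \<subseteq> topspace canonical_topology"
    unfolding dom topspace_canonical_topology by (rule U_mcs)
  fix x i assume "x \<in> dom \<theta>"
  then have x: "x \<in> U" "max_consistent x"
    using dom U_mcs by auto
  show "openin canonical_topology (the (\<theta> x) i)"
    unfolding cell[OF x(1)] openin_canonical_topology
    by (rule canonical_open_Int[OF canonical_open_cell U])
  show "x \<in> the (\<theta> x) i"
    unfolding cell[OF x(1)] canonical_cell_def canonical_rel_def using x by blast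
  show "the (\<theta> x) i \<subseteq> dom \<theta>"
    unfolding cell[OF x(1)] dom by blast
  fix y assume "y \<in> the (\<theta> x) i"
  then have "y \<in> U" and "canonical_cell y i = canonical_cell x i"
    unfolding cell[OF x(1)] canonical_cell_def canonical_rel_def by auto
  then show "the (\<theta> x) i = the (\<theta> y) i"
    using cell x(1) by simp
next
  fix \<theta> :: "(('p, 'a) fm set, 'a) nbf" and U :: "('p, 'a) fm set set"
  assume "\<theta> \<in> canonical_nbf_set" and "openin canonical_topology U"
  then obtain W where "\<theta> = restr W canonical_nbf" and "canonical_open W" and "canonical_open U"
    unfolding canonical_nbf_set_def openin_canonical_topology by blast
  moreover have "canonical_open (U \<inter> W)"
    using calculation(2,3) by (rule canonical_open_Int[rotated])
  ultimately show "restr U \<theta> \<in> canonical_nbf_set"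
    unfolding canonical_nbf_set_def by (auto simp: restr_restr)
qed

lemma canonical_nbf_mem: "(canonical_nbf :: (('p, 'a) fm set, 'a) nbf) \<in> canonical_nbf_set"
proof -
  have "restr {x. max_consistent x} (canonical_nbf :: (('p, 'a) fm set, 'a) nbf) = canonical_nbf"
    by (auto simp: restr_def canonical_nbf_def canonical_cell_def fun_eq_iff)
  then show ?thesis
    unfolding canonical_nbf_set_def using canonical_open_space by force
qed

lemma canonical_open_IntOp: "canonical_open {y. max_consistent y \<and> IntOp \<phi> \<in> y}"
  unfolding canonical_open_def
proof (intro conjI ballI)
  fix x assume "x \<in> {y. max_consistent y \<and> IntOp \<phi> \<in> y}"
  then have "IntOp (IntOp \<phi>) \<in> x"
    using max_consistent_MP max_consistent_derivable[OF _ Int_4] by blast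
  moreover have "canonical_basic x (IntOp \<phi>) \<subseteq> {y. max_consistent y \<and> IntOp \<phi> \<in> y}"
    unfolding canonical_basic_def by blast
  ultimately show "\<exists>\<psi>. IntOp \<psi> \<in> x \<and> canonical_basic x \<psi> \<subseteq> {y. max_consistent y \<and> IntOp \<phi> \<in> y}"
    by blast
qed blast

text \<open>The axiom \<open>K\<^sub>i \<phi> \<rightarrow> int \<phi>\<close> turns the facts \<open>K\<^sub>i \<chi> \<in> x\<close>, which carve
  out \<open>canonical_basic x \<psi>\<close>, into facts \<open>int \<chi> \<in> x\<close>.\<close>
lemma IntOp_mem_if_canonical_basic_subset:
  assumes x: "max_consistent x" and "IntOp \<psi> \<in> x"
    and basic: "canonical_basic x \<psi> \<subseteq> {y. max_consistent y \<and> \<phi> \<in> y}"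
  shows "IntOp \<phi> \<in> x"
proof -
  let ?\<Gamma> = "insert \<psi> {\<chi>. \<exists>i. K i \<chi> \<in> x}"
  have "derivable_from ?\<Gamma> \<phi>"
    unfolding derivable_from_iff_max_consistent
  proof (intro allI impI)
    fix y assume "max_consistent y \<and> ?\<Gamma> \<subseteq> y"
    then have y: "max_consistent y" and "\<psi> \<in> y" and "\<forall>\<chi>. K i \<chi> \<in> x \<longrightarrow> \<chi> \<in> y" for i
      by auto
    then have "y \<in> canonical_basic x \<psi>"
      unfolding canonical_basic_def using canonical_relI[OF x y] y by simp
    then show "\<phi> \<in> y"
      using basic by blast
  qed
  moreover have "\<chi> \<in> {\<chi>. IntOp \<chi> \<in> x}" if "K i \<chi> \<in> x" for i \<chi>
    using max_consistent_MP[OF x max_consistent_derivable[OF x K_Int] that] by simp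
  then have "?\<Gamma> \<subseteq> {\<chi>. IntOp \<chi> \<in> x}"
    using assms(2) by blast
  ultimately have "derivable_from {\<chi>. IntOp \<chi> \<in> x} \<phi>"
    by (rule derivable_from_mono)
  then show ?thesis
    by (rule max_consistent_normal_modality[OF x normal_modality_IntOp])
qed

lemma max_consistent_IntOp_iff:
  assumes x: "max_consistent x"
  shows "IntOp \<phi> \<in> x \<longleftrightarrow> x \<in> canonical_topology interior_of {y. max_consistent y \<and> \<phi> \<in> y}"
proof
  assume "IntOp \<phi> \<in> x"
  have "\<phi> \<in> y" if "max_consistent y" and "IntOp \<phi> \<in> y" for y
    by (rule max_consistent_MP[OF that(1) max_consistent_derivable[OF that(1) Int_T] that(2)])
  then have "{y. max_consistent y \<and> IntOp \<phi> \<in> y}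
      \<subseteq> canonical_topology interior_of {y. max_consistent y \<and> \<phi> \<in> y}"
    by (intro interior_of_maximal) (auto simp: openin_canonical_topology canonical_open_IntOp)
  then show "x \<in> canonical_topology interior_of {y. max_consistent y \<and> \<phi> \<in> y}"
    using x \<open>IntOp \<phi> \<in> x\<close> by blast
next
  assume "x \<in> canonical_topology interior_of {y. max_consistent y \<and> \<phi> \<in> y}"
  then obtain U where "canonical_open U" "x \<in> U" "U \<subseteq> {y. max_consistent y \<and> \<phi> \<in> y}"
    unfolding interior_of_def openin_canonical_topology by blast
  moreover obtain \<psi> where "IntOp \<psi> \<in> x" "canonical_basic x \<psi> \<subseteq> U"
    using calculation(1,2) unfolding canonical_open_def by blast
  ultimately have "canonical_basic x \<psi> \<subseteq> {y. max_consistent y \<and> \<phi> \<in> y}"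
    by blast
  then show "IntOp \<phi> \<in> x"
    by (rule IntOp_mem_if_canonical_basic_subset[OF x \<open>IntOp \<psi> \<in> x\<close>])
qed

theorem truth_lemma:
  "static \<phi> \<Longrightarrow> max_consistent x \<Longrightarrow> sat canonical_topology canonical_val \<phi> canonical_nbf x \<longleftrightarrow> \<phi> \<in> x"
proof (induction \<phi> arbitrary: x)
  case (Atom p)
  then show ?case
    by (simp add: canonical_val_def)
next
  case (Neg \<phi>)
  then show ?case
    by (simp add: max_consistent_Neg)
next
  case (Conj \<phi> \<psi>)
  then show ?case
    by (simp add: max_consistent_Conj)
next
  case (K i \<phi>)
  then show ?case
    by (auto simp: the_canonical_nbf canonical_cell_def max_consistent_K_iff)
next
  case (IntOp \<phi>)
  then have "{y \<in> dom canonical_nbf. sat canonical_topology canonical_val \<phi> canonical_nbf y}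
      = {y. max_consistent y \<and> \<phi> \<in> y}"
    by (auto simp: dom_canonical_nbf)
  then show ?case
    using max_consistent_IntOp_iff[OF IntOp.prems(2)] by simp
qed simp

lemma static_canonical_valid_derivable:
  assumes "static \<phi>" and "valid_in canonical_topology canonical_nbf_set canonical_val \<phi>"
  shows "derivable \<phi>"
proof -
  have "\<phi> \<in> x" if "max_consistent x" for x
  proof -
    have "x \<in> dom canonical_nbf"
      using that by (simp add: dom_canonical_nbf)
    then have "sat canonical_topology canonical_val \<phi> canonical_nbf x"
      using assms(2) canonical_nbf_mem unfolding valid_in_def by blast
    then show ?thesis
      using truth_lemma[OF assms(1) that] by blast
  qed
  then show ?thesis
    using derivable_from_iff_max_consistent[of "{}" \<phi>] by simp
qed

theorem mainTheorem2:
  fixes \<phi> :: "('p :: countable, 'a :: finite) fm"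
  assumes "valid_all TYPE(('p, 'a) fm set) \<phi>"
  shows "derivable \<phi>"
proof -
  obtain s where "static s" and s: "derivable (Iff \<phi> s)"
    using has_static_equiv unfolding has_static_equiv_def by blast
  have "valid_in canonical_topology canonical_nbf_set canonical_val \<phi>"
    using assms topo_model_canonical unfolding valid_all_def by blast
  moreover have "valid_in canonical_topology canonical_nbf_set canonical_val (Iff \<phi> s)"
    using topo_model_canonical s by (rule topo_model_derivable_valid)
  ultimately have "valid_in canonical_topology canonical_nbf_set canonical_val s"
    unfolding valid_in_def by simp
  then have "derivable s"
    using \<open>static s\<close> static_canonical_valid_derivable by blast
  then show ?thesis
    using s by (intro derivable_by_tautology[of "[Iff \<phi> s, s]"]) (auto simp: tautology_def)
qed

end
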